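(* Let $X$ be a locally convex space, let $T:X\rightrightarrows X^{*}$, and let $V\subset X$ with $V\cap D(T)\neq\emptyset$. The following are equivalent: (i) $T$ is $V$-representable; (ii) $T|_{V}\in\mathcal{M}(X)$ and $[\psi_{T|_{V}}=c]\cap(V\times X^{*})\subset T|_{V}$; (iii) $T|_{V}\in\mathcal{M}(X)$ and $[\psi_{T|_{V}}=c]\cap(V\times X^{*})=T|_{V}$; (iv) $\psi_{T|_{V}}$ is a $V$-representative of $T|_{V}$.
   Context: $(X,\tau)$ is a non-trivial Hausdorff locally convex space, $X^*$ its dual with weak-star topology $\omega^*$, $Z=X\times X^*$ with topology $\tau\times\omega^*$, $c(x,x^* )=\langle x,x^*\rangle$. Operators are identified with their graphs; $D(T)$ is the domain; $T|_V$ has graph $\operatorname{Graph}T\cap(V\times X^* )$. $\psi_T$ is the $\tau\times\omega^*$-lsc convex hull of $c+\iota_{\operatorname{Graph}T}$ (the greatest $\tau\times\omega^*$-lsc convex function majorized by it). $[f=g]=\{z\mid f(z)=g(z)\}$. $\mathcal M(X)$: monotone operators with non-empty graph. $\mathscr R$: proper convex $\tau\times\omega^*$-lsc $h:Z\to\overline{\mathbb R}$ with $h\ge c$. $T$ is $V$-representable if $V\cap D(T)\neq\emptyset$ and there is $h\in\mathscr R$ (a $V$-representative of $T$) with $[h=c]\cap(V\times X^* )=\operatorname{Graph}(T|_V)$. *)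

theory Defs
  imports "HOL-Analysis.Analysis"
begin

definition lcs :: "'a::real_vector topology \<Rightarrow> bool" where
  "lcs tau \<longleftrightarrow> topspace tau = UNIV \<and> Hausdorff_space tau
     \<and> continuous_map (prod_topology tau tau) tau (\<lambda>(x, y). x + y)
     \<and> continuous_map (prod_topology euclideanreal tau) tau (\<lambda>(t, x). t *\<^sub>R x)
     \<and> (\<forall>U. openin tau U \<and> 0 \<in> U \<longrightarrow> (\<exists>W. openin tau W \<and> convex W \<and> 0 \<in> W \<and> W \<subseteq> U))"

definition nontrivial_space :: "'a::real_vector topology \<Rightarrow> bool" where
  "nontrivial_space tau \<longleftrightarrow> (\<exists>x::'a. x \<noteq> 0)"

definition dual :: "'a::real_vector topology \<Rightarrow> ('a \<Rightarrow> real) set" where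
  "dual tau = {f. linear f \<and> continuous_map tau euclideanreal f}"

definition wstar :: "'a::real_vector topology \<Rightarrow> ('a \<Rightarrow> real) topology" where
  "wstar tau = subtopology (product_topology (\<lambda>_. euclideanreal) UNIV) (dual tau)"

definition Zspace :: "'a::real_vector topology \<Rightarrow> ('a \<times> ('a \<Rightarrow> real)) set" where
  "Zspace tau = UNIV \<times> dual tau"

definition Ztop :: "'a::real_vector topology \<Rightarrow> ('a \<times> ('a \<Rightarrow> real)) topology" where
  "Ztop tau = prod_topology tau (wstar tau)"

definition cpl :: "'a \<times> ('a \<Rightarrow> real) \<Rightarrow> real" where
  "cpl z = snd z (fst z)"

definition zcomb :: "real \<Rightarrow> 'a::real_vector \<times> ('a \<Rightarrow> real) \<Rightarrow> 'a \<times> ('a \<Rightarrow> real) \<Rightarrow> 'a \<times> ('a \<Rightarrow> real)" where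
  "zcomb t z w = (t *\<^sub>R fst z + (1 - t) *\<^sub>R fst w, \<lambda>y. t * snd z y + (1 - t) * snd w y)"

definition convex_Z :: "'a::real_vector topology \<Rightarrow> ('a \<times> ('a \<Rightarrow> real) \<Rightarrow> ereal) \<Rightarrow> bool" where
  "convex_Z tau h \<longleftrightarrow> (\<forall>z\<in>Zspace tau. \<forall>w\<in>Zspace tau. \<forall>r s t. h z \<le> ereal r \<and> h w \<le> ereal s
      \<and> 0 \<le> t \<and> t \<le> 1 \<longrightarrow> h (zcomb t z w) \<le> ereal (t * r + (1 - t) * s))"

definition lsc_Z :: "'a::real_vector topology \<Rightarrow> ('a \<times> ('a \<Rightarrow> real) \<Rightarrow> ereal) \<Rightarrow> bool" where
  "lsc_Z tau h \<longleftrightarrow> (\<forall>a::ereal. closedin (Ztop tau) {z \<in> Zspace tau. h z \<le> a})"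

definition proper_Z :: "'a::real_vector topology \<Rightarrow> ('a \<times> ('a \<Rightarrow> real) \<Rightarrow> ereal) \<Rightarrow> bool" where
  "proper_Z tau h \<longleftrightarrow> (\<forall>z\<in>Zspace tau. h z \<noteq> -\<infinity>) \<and> (\<exists>z\<in>Zspace tau. h z < \<infinity>)"

definition Rcl :: "'a::real_vector topology \<Rightarrow> ('a \<times> ('a \<Rightarrow> real) \<Rightarrow> ereal) set" where
  "Rcl tau = {h. proper_Z tau h \<and> convex_Z tau h \<and> lsc_Z tau h
               \<and> (\<forall>z\<in>Zspace tau. ereal (cpl z) \<le> h z)}"

text \<open>Operators X \<rightrightarrows> X* are identified with their graphs (subsets of Z).\<close>
type_synonym 'a op = "('a \<times> ('a \<Rightarrow> real)) set"

definition operator :: "'a::real_vector topology \<Rightarrow> 'a op \<Rightarrow> bool" where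
  "operator tau T \<longleftrightarrow> T \<subseteq> Zspace tau"

definition dom_op :: "'a op \<Rightarrow> 'a set" where
  "dom_op T = fst ` T"

definition restr :: "'a op \<Rightarrow> 'a set \<Rightarrow> 'a op" where
  "restr T V = T \<inter> (V \<times> UNIV)"

definition monotone_op :: "'a::real_vector op \<Rightarrow> bool" where
  "monotone_op T \<longleftrightarrow> T \<noteq> {} \<and>
     (\<forall>(x, f)\<in>T. \<forall>(y, g)\<in>T. 0 \<le> (f x - g x) - (f y - g y))"

definition psi :: "'a::real_vector topology \<Rightarrow> 'a op \<Rightarrow> ('a \<times> ('a \<Rightarrow> real) \<Rightarrow> ereal)" where
  "psi tau T z = Sup {g z | g. convex_Z tau g \<and> lsc_Z tau g \<and>
      (\<forall>w\<in>Zspace tau. g w \<le> (if w \<in> T then ereal (cpl w) else \<infinity>))}"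

definition eqc :: "'a::real_vector topology \<Rightarrow> ('a \<times> ('a \<Rightarrow> real) \<Rightarrow> ereal) \<Rightarrow> 'a op" where
  "eqc tau h = {z \<in> Zspace tau. h z = ereal (cpl z)}"

definition V_representative :: "'a::real_vector topology \<Rightarrow> 'a set \<Rightarrow> 'a op \<Rightarrow> ('a \<times> ('a \<Rightarrow> real) \<Rightarrow> ereal) \<Rightarrow> bool" where
  "V_representative tau V T h \<longleftrightarrow> h \<in> Rcl tau \<and> eqc tau h \<inter> (V \<times> UNIV) = restr T V"

definition V_representable :: "'a::real_vector topology \<Rightarrow> 'a set \<Rightarrow> 'a op \<Rightarrow> bool" where
  "V_representable tau V T \<longleftrightarrow> V \<inter> dom_op T \<noteq> {} \<and> (\<exists>h. V_representative tau V T h)"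

end

theory Submission
  imports Defs
begin

text \<open>For a monotone graph S, psi S \<ge> c: at a point z either z is monotonically related to
  all of S, and the linearization of c at z is an lsc convex minorant of c + \<iota>(S) touching c
  at z, or some v \<in> S has \<langle>z - v, z* - v*\<rangle> < 0, and then the linearization of c at v is
  such a minorant lying strictly above c at z. A V-representative h of T lies below
  psi (T|V) by maximality, so psi (T|V) inherits h \<ge> c and touches c on V \<times> X* only where h
  does; the touching set of any convex h \<ge> c is monotone, which gives (iv) \<Rightarrow> (iii).\<close>

lemma topspace_Ztop: "lcs tau \<Longrightarrow> topspace (Ztop tau) = Zspace tau"
  by (simp add: lcs_def Ztop_def Zspace_def wstar_def)

lemma dual_convex_comb:
  assumes "f \<in> dual tau" "g \<in> dual tau"
  shows "(\<lambda>y. t * f y + (1 - t) * g y) \<in> dual tau"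
proof -
  have "linear f" "linear g" using assms by (auto simp: dual_def)
  hence "linear (\<lambda>y. t * f y + (1 - t) * g y)"
    unfolding linear_iff
    by (simp add: linear_add linear_scale distrib_left mult.left_commute)
  moreover have "continuous_map tau euclideanreal (\<lambda>y. t * f y + (1 - t) * g y)"
    using assms by (auto simp: dual_def intro!: continuous_intros)
  ultimately show ?thesis by (simp add: dual_def)
qed

lemma zcomb_in_Zspace:
  assumes "z \<in> Zspace tau" "w \<in> Zspace tau"
  shows "zcomb t z w \<in> Zspace tau"
  using assms dual_convex_comb[of "snd z" tau "snd w" t] by (auto simp: Zspace_def zcomb_def)

lemma continuous_map_Ztop_eval:
  assumes "lcs tau" "g \<in> dual tau"
  shows "continuous_map (Ztop tau) euclideanreal (\<lambda>z. g (fst z) + snd z y - g y)"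
proof -
  have "continuous_map tau euclideanreal g" using assms by (simp add: dual_def)
  hence fst: "continuous_map (Ztop tau) euclideanreal (\<lambda>z. g (fst z))"
    using continuous_map_compose[OF continuous_map_fst] unfolding Ztop_def by (simp add: o_def)
  have "continuous_map (wstar tau) euclideanreal (\<lambda>f. f y)"
    unfolding wstar_def
    by (rule continuous_map_from_subtopology) (rule continuous_map_product_projection, simp)
  hence snd: "continuous_map (Ztop tau) euclideanreal (\<lambda>z. snd z y)"
    using continuous_map_compose[OF continuous_map_snd] unfolding Ztop_def by (simp add: o_def)
  show ?thesis using fst snd by (intro continuous_intros)
qed

text \<open>The linearization of c at w; note c z - cpl_lin w z = \<langle>fst z - fst w, snd z - snd w\<rangle>.\<close>
definition cpl_lin :: "'a \<times> ('a \<Rightarrow> real) \<Rightarrow> 'a \<times> ('a \<Rightarrow> real) \<Rightarrow> ereal" where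
  "cpl_lin w z = ereal (snd w (fst z) + snd z (fst w) - snd w (fst w))"

lemma lsc_Z_cpl_lin:
  assumes "lcs tau" "w \<in> Zspace tau"
  shows "lsc_Z tau (cpl_lin w)"
  unfolding lsc_Z_def
proof
  fix a :: ereal
  have cont: "continuous_map (Ztop tau) euclideanreal
      (\<lambda>z. snd w (fst z) + snd z (fst w) - snd w (fst w))"
    using continuous_map_Ztop_eval[OF assms(1), of "snd w" "fst w"] assms(2)
    by (auto simp: Zspace_def)
  show "closedin (Ztop tau) {z \<in> Zspace tau. cpl_lin w z \<le> a}"
  proof (cases a)
    case (real r)
    have "closedin (Ztop tau) {z \<in> topspace (Ztop tau).
        (snd w (fst z) + snd z (fst w) - snd w (fst w)) \<in> {..r}}"
      by (rule closedin_continuous_map_preimage[OF cont]) simp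
    thus ?thesis using real by (simp add: cpl_lin_def topspace_Ztop[OF assms(1)])
  next
    case PInf
    thus ?thesis using closedin_topspace[of "Ztop tau"] by (simp add: topspace_Ztop[OF assms(1)])
  next
    case MInf
    thus ?thesis by (simp add: cpl_lin_def)
  qed
qed

lemma convex_Z_cpl_lin:
  assumes "w \<in> Zspace tau"
  shows "convex_Z tau (cpl_lin w)"
  unfolding convex_Z_def
proof (intro ballI allI impI)
  fix z u and r s t :: real
  assume h: "cpl_lin w z \<le> ereal r \<and> cpl_lin w u \<le> ereal s \<and> 0 \<le> t \<and> t \<le> 1"
  let ?l = "\<lambda>z. snd w (fst z) + snd z (fst w) - snd w (fst w)"
  have "linear (snd w)" using assms by (auto simp: Zspace_def dual_def)
  hence "snd w (t *\<^sub>R fst z + (1 - t) *\<^sub>R fst u) = t * snd w (fst z) + (1 - t) * snd w (fst u)"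
    by (simp add: linear_add linear_scale)
  hence "?l (zcomb t z u) = t * ?l z + (1 - t) * ?l u"
    by (simp add: zcomb_def algebra_simps)
  moreover have "t * ?l z \<le> t * r" "(1 - t) * ?l u \<le> (1 - t) * s"
    using h by (auto simp: cpl_lin_def intro: mult_left_mono)
  ultimately show "cpl_lin w (zcomb t z u) \<le> ereal (t * r + (1 - t) * s)"
    by (simp add: cpl_lin_def)
qed

lemma psi_le_graph:
  assumes "z \<in> Zspace tau"
  shows "psi tau S z \<le> (if z \<in> S then ereal (cpl z) else \<infinity>)"
  unfolding psi_def using assms by (auto intro!: Sup_least)

lemma le_psi:
  assumes "convex_Z tau g" "lsc_Z tau g"
    "\<forall>w\<in>Zspace tau. g w \<le> (if w \<in> S then ereal (cpl w) else \<infinity>)"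
  shows "g z \<le> psi tau S z"
  unfolding psi_def by (rule Sup_upper) (use assms in blast)

lemma convex_Z_psi: "convex_Z tau (psi tau S)"
  unfolding convex_Z_def
proof (intro ballI allI impI)
  fix z w and r s t :: real
  assume z: "z \<in> Zspace tau" and w: "w \<in> Zspace tau"
    and h: "psi tau S z \<le> ereal r \<and> psi tau S w \<le> ereal s \<and> 0 \<le> t \<and> t \<le> 1"
  show "psi tau S (zcomb t z w) \<le> ereal (t * r + (1 - t) * s)"
    unfolding psi_def
  proof (rule Sup_least, clarify)
    fix g assume g: "convex_Z tau g" "lsc_Z tau g"
      "\<forall>w\<in>Zspace tau. g w \<le> (if w \<in> S then ereal (cpl w) else \<infinity>)"
    have "g z \<le> ereal r" "g w \<le> ereal s" using le_psi[OF g] h order_trans by blast+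
    thus "g (zcomb t z w) \<le> ereal (t * r + (1 - t) * s)"
      using g(1) z w h unfolding convex_Z_def by blast
  qed
qed

lemma lsc_Z_psi:
  assumes "lcs tau"
  shows "lsc_Z tau (psi tau S)"
  unfolding lsc_Z_def
proof
  fix a :: ereal
  define G where "G = {g. convex_Z tau g \<and> lsc_Z tau g \<and>
      (\<forall>w\<in>Zspace tau. g w \<le> (if w \<in> S then ereal (cpl w) else \<infinity>))}"
  define K where "K = insert (Zspace tau) ((\<lambda>g. {z \<in> Zspace tau. g z \<le> a}) ` G)"
  have "\<And>z. psi tau S z = Sup ((\<lambda>g. g z) ` G)"
    unfolding psi_def G_def by (rule arg_cong[where f=Sup]) auto
  hence sublevel: "{z \<in> Zspace tau. psi tau S z \<le> a} = \<Inter>K"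
    unfolding K_def by (auto simp: Sup_le_iff)
  have "closedin (Ztop tau) (\<Inter>K)"
    using closedin_topspace[of "Ztop tau"]
    by (intro closedin_Inter) (auto simp: K_def G_def lsc_Z_def topspace_Ztop[OF assms])
  thus "closedin (Ztop tau) {z \<in> Zspace tau. psi tau S z \<le> a}" using sublevel by simp
qed

lemma cpl_lin_le_graph_if_monotone:
  assumes "monotone_op S" "v \<in> S" "u \<in> Zspace tau"
  shows "cpl_lin v u \<le> (if u \<in> S then ereal (cpl u) else \<infinity>)"
proof -
  have "0 \<le> (snd u (fst u) - snd v (fst u)) - (snd u (fst v) - snd v (fst v))" if "u \<in> S"
    using assms(1,2) that unfolding monotone_op_def by fastforce
  thus ?thesis by (auto simp: cpl_lin_def cpl_def)
qed

lemma cpl_le_psi_if_monotone: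
  assumes "lcs tau" "monotone_op S" "S \<subseteq> Zspace tau" "z \<in> Zspace tau"
  shows "ereal (cpl z) \<le> psi tau S z"
proof -
  obtain w where w: "w \<in> Zspace tau"
    and minorant: "\<forall>u\<in>Zspace tau. cpl_lin w u \<le> (if u \<in> S then ereal (cpl u) else \<infinity>)"
    and above: "ereal (cpl z) \<le> cpl_lin w z"
  proof (cases "\<forall>u\<in>S. 0 \<le> (snd u (fst u) - snd z (fst u)) - (snd u (fst z) - snd z (fst z))")
    case True
    show ?thesis
      by (rule that[of z]) (use True assms(4) in \<open>auto simp: cpl_lin_def cpl_def\<close>)
  next
    case False
    then obtain v where "v \<in> S"
      and "(snd v (fst v) - snd z (fst v)) - (snd v (fst z) - snd z (fst z)) < 0"
      by (auto simp: not_le)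
    thus ?thesis
      using that[of v] assms(3) cpl_lin_le_graph_if_monotone[OF assms(2)]
      by (auto simp: cpl_lin_def cpl_def)
  qed
  have "cpl_lin w z \<le> psi tau S z"
    by (rule le_psi[OF convex_Z_cpl_lin[OF w] lsc_Z_cpl_lin[OF assms(1) w] minorant])
  thus ?thesis using above by simp
qed

text \<open>Convexity at the midpoint m of z and w gives c m \<le> (c z + c w) / 2, and
  c m = (c z + c w) / 2 - \<langle>z - w, z* - w*\<rangle> / 4.\<close>
lemma monotone_pair_if_eqc:
  assumes "convex_Z tau h" "\<forall>z\<in>Zspace tau. ereal (cpl z) \<le> h z"
    "z \<in> eqc tau h" "w \<in> eqc tau h"
  shows "0 \<le> (snd z (fst z) - snd w (fst z)) - (snd z (fst w) - snd w (fst w))"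
proof -
  have z: "z \<in> Zspace tau" "h z = ereal (cpl z)"
    and w: "w \<in> Zspace tau" "h w = ereal (cpl w)" using assms(3,4) by (auto simp: eqc_def)
  define m where "m = zcomb (1/2) z w"
  have "m \<in> Zspace tau" unfolding m_def by (rule zcomb_in_Zspace[OF z(1) w(1)])
  hence "ereal (cpl m) \<le> h m" using assms(2) by blast
  also have "h m \<le> ereal (1/2 * cpl z + (1 - 1/2) * cpl w)"
    unfolding m_def
    by (rule convex_Z_def[THEN iffD1, OF assms(1), rule_format, OF z(1) w(1)])
      (use z(2) w(2) in simp)
  finally have le: "cpl m \<le> 1/2 * cpl z + 1/2 * cpl w" by simp
  have "linear (snd z)" "linear (snd w)" using z(1) w(1) by (auto simp: Zspace_def dual_def)
  hence "cpl m = 1/4 * (snd z (fst z) + snd z (fst w) + snd w (fst z) + snd w (fst w))"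
    unfolding m_def zcomb_def cpl_def
    by (simp add: linear_add linear_scale algebra_simps) (simp add: field_simps)
  thus ?thesis using le by (simp add: cpl_def)
qed

lemma monotone_op_if_subset_eqc:
  assumes "convex_Z tau h" "\<forall>z\<in>Zspace tau. ereal (cpl z) \<le> h z"
    "S \<subseteq> eqc tau h" "S \<noteq> {}"
  shows "monotone_op S"
  unfolding monotone_op_def
  using assms(4) monotone_pair_if_eqc[OF assms(1,2)] assms(3) by fastforce

lemma subset_eqc_psi:
  assumes "S \<subseteq> Zspace tau" "\<forall>z\<in>Zspace tau. ereal (cpl z) \<le> psi tau S z"
  shows "S \<subseteq> eqc tau (psi tau S)"
proof
  fix z assume "z \<in> S"
  hence z: "z \<in> Zspace tau" using assms(1) by blast
  hence "psi tau S z \<le> ereal (cpl z)" using psi_le_graph[OF z, of S] \<open>z \<in> S\<close> by simp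
  hence "psi tau S z = ereal (cpl z)" using assms(2) z by (blast intro: order_antisym)
  thus "z \<in> eqc tau (psi tau S)" using z by (simp add: eqc_def)
qed

lemma psi_in_Rcl:
  assumes "lcs tau" "S \<subseteq> Zspace tau" "S \<noteq> {}"
    "\<forall>z\<in>Zspace tau. ereal (cpl z) \<le> psi tau S z"
  shows "psi tau S \<in> Rcl tau"
proof -
  obtain z where "z \<in> S" using assms(3) by blast
  hence "z \<in> eqc tau (psi tau S)" using subset_eqc_psi[OF assms(2,4)] by blast
  hence "z \<in> Zspace tau" "psi tau S z < \<infinity>" by (auto simp: eqc_def)
  moreover have "\<forall>z\<in>Zspace tau. psi tau S z \<noteq> -\<infinity>" using assms(4) by force
  ultimately show ?thesis
    using assms(4) convex_Z_psi lsc_Z_psi[OF assms(1)] by (auto simp: Rcl_def proper_Z_def)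
qed

lemma le_psi_if_subset_eqc:
  assumes "convex_Z tau h" "lsc_Z tau h" "S \<subseteq> eqc tau h"
  shows "h z \<le> psi tau S z"
  by (rule le_psi[OF assms(1,2)]) (use assms(3) in \<open>auto simp: eqc_def\<close>)

lemma V_representative_restr:
  "V_representative tau V (restr T V) h \<longleftrightarrow> V_representative tau V T h"
  by (auto simp: V_representative_def restr_def)

lemma monotone_op_restr_if_representative:
  assumes "V_representative tau V T h" "restr T V \<noteq> {}"
  shows "monotone_op (restr T V)"
proof (rule monotone_op_if_subset_eqc)
  have "h \<in> Rcl tau" and eqc_h: "eqc tau h \<inter> (V \<times> UNIV) = restr T V"
    using assms(1) unfolding V_representative_def by blast+
  thus "convex_Z tau h" "\<forall>z\<in>Zspace tau. ereal (cpl z) \<le> h z"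
    unfolding Rcl_def by blast+
  show "restr T V \<subseteq> eqc tau h" using eqc_h by blast
qed (fact assms(2))

lemma psi_representative_if_representative:
  assumes "lcs tau" "V_representative tau V T h" "restr T V \<noteq> {}"
  shows "V_representative tau V T (psi tau (restr T V))"
proof -
  let ?S = "restr T V" and ?p = "psi tau (restr T V)"
  have h: "convex_Z tau h" "lsc_Z tau h" "\<forall>z\<in>Zspace tau. ereal (cpl z) \<le> h z"
    and eqc_h: "eqc tau h \<inter> (V \<times> UNIV) = ?S"
    using assms(2) by (auto simp: V_representative_def Rcl_def)
  have "?S \<subseteq> eqc tau h" using eqc_h by blast
  hence h_le: "\<And>z. h z \<le> ?p z" by (rule le_psi_if_subset_eqc[OF h(1,2)])
  hence c_le: "\<forall>z\<in>Zspace tau. ereal (cpl z) \<le> ?p z" using h(3) order_trans by blast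
  have SZ: "?S \<subseteq> Zspace tau" using eqc_h by (auto simp: eqc_def)
  have "eqc tau ?p \<subseteq> eqc tau h"
  proof
    fix z assume "z \<in> eqc tau ?p"
    hence z: "z \<in> Zspace tau" "?p z = ereal (cpl z)" by (auto simp: eqc_def)
    hence "h z = ereal (cpl z)" using h_le[of z] h(3) by (metis order_antisym)
    thus "z \<in> eqc tau h" using z(1) by (simp add: eqc_def)
  qed
  hence "eqc tau ?p \<inter> (V \<times> UNIV) = ?S"
    using eqc_h subset_eqc_psi[OF SZ c_le] by (auto simp: restr_def)
  thus ?thesis
    using psi_in_Rcl[OF assms(1) SZ assms(3) c_le] by (simp add: V_representative_def)
qed

lemma psi_representative_if_monotone:
  assumes "lcs tau" "restr T V \<subseteq> Zspace tau" "monotone_op (restr T V)"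
    "eqc tau (psi tau (restr T V)) \<inter> (V \<times> UNIV) \<subseteq> restr T V"
  shows "V_representative tau V T (psi tau (restr T V))"
proof -
  have c_le: "\<forall>z\<in>Zspace tau. ereal (cpl z) \<le> psi tau (restr T V) z"
    using cpl_le_psi_if_monotone[OF assms(1,3,2)] by blast
  have "restr T V \<subseteq> V \<times> UNIV" by (auto simp: restr_def)
  hence "eqc tau (psi tau (restr T V)) \<inter> (V \<times> UNIV) = restr T V"
    using assms(4) subset_eqc_psi[OF assms(2) c_le] by blast
  moreover have "restr T V \<noteq> {}" using assms(3) by (simp add: monotone_op_def)
  ultimately show ?thesis
    using psi_in_Rcl[OF assms(1,2) _ c_le] by (simp add: V_representative_def)
qed

theorem theorem2p14:
  fixes tau :: "'a::real_vector topology" and T :: "'a op" and V :: "'a set"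
  assumes "lcs tau" and "nontrivial_space tau"
    and "operator tau T"
    and "V \<inter> dom_op T \<noteq> {}"
  shows "(V_representable tau V T
            \<longleftrightarrow> (monotone_op (restr T V) \<and> eqc tau (psi tau (restr T V)) \<inter> (V \<times> UNIV) \<subseteq> restr T V))
       \<and> (V_representable tau V T
            \<longleftrightarrow> (monotone_op (restr T V) \<and> eqc tau (psi tau (restr T V)) \<inter> (V \<times> UNIV) = restr T V))
       \<and> (V_representable tau V T
            \<longleftrightarrow> V_representative tau V (restr T V) (psi tau (restr T V)))"
proof -
  let ?S = "restr T V" and ?p = "psi tau (restr T V)"
  have SZ: "?S \<subseteq> Zspace tau" using assms(3) by (auto simp: operator_def restr_def)
  obtain x f where "x \<in> V" "(x, f) \<in> T" using assms(4) by (auto simp: dom_op_def)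
  hence "?S \<noteq> {}" by (auto simp: restr_def)
  hence representable: "V_representable tau V T \<longleftrightarrow> V_representative tau V T ?p"
    using psi_representative_if_representative[OF assms(1)] assms(4)
    unfolding V_representable_def by blast
  have iii: "monotone_op ?S \<and> eqc tau ?p \<inter> (V \<times> UNIV) = ?S" if "V_representable tau V T"
  proof -
    have "V_representative tau V T ?p" using that representable by blast
    thus ?thesis using monotone_op_restr_if_representative[OF _ \<open>?S \<noteq> {}\<close>]
      unfolding V_representative_def by blast
  qed
  have ii: "V_representable tau V T"
    if "monotone_op ?S" "eqc tau ?p \<inter> (V \<times> UNIV) \<subseteq> ?S"
    using psi_representative_if_monotone[OF assms(1) SZ that] representable by blast
  have "V_representable tau V T
      \<longleftrightarrow> monotone_op ?S \<and> eqc tau ?p \<inter> (V \<times> UNIV) \<subseteq> ?S"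
    using iii ii by blast
  moreover have "V_representable tau V T
      \<longleftrightarrow> monotone_op ?S \<and> eqc tau ?p \<inter> (V \<times> UNIV) = ?S"
    using iii ii by blast
  ultimately show ?thesis
    using representable by (simp add: V_representative_restr)
qed

end
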